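(* Let $n\geqslant 3$ and $N=2^n-1$. Let $$\mathcal{W}_n=\Big\{(x_1,\dots,x_n,y_1,\dots,y_n)\in\mathbb{Z}^{2n}:\ y_1\cdots y_n\neq 0,\ \sum_{i=1}^n x_i\prod_{j\neq i}y_j=0\Big\}$$ and let $\mathcal{A}_n$ be the set of $(\mathbf{x}';(z_h)_{1\leqslant h\leqslant N})\in\mathbb{Z}^n\times(\mathbb{Z}\smallsetminus\{0\})^{N}$ such that $(z_h)$ is reduced, $z_h>0$ whenever $s(h)\geqslant 2$, and $$\sum_{j=1}^n\Big(\prod_{1\leqslant h\leqslant N}z_h^{1-\varepsilon_j(h)}\Big)z_{2^{j-1}}x'_j=0.$$ Then the map $$(\mathbf{x}';(z_h))\longmapsto\Big(z_1x'_1,z_2x'_2,\dots,z_{2^{n-1}}x'_n,\ \prod_{h}z_h^{\varepsilon_1(h)},\dots,\prod_h z_h^{\varepsilon_n(h)}\Big)$$ is a bijection from $\mathcal{A}_n$ onto $\mathcal{W}_n$.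
   Context: For $h\in\{1,\dots,N\}$ write $h=\sum_j\varepsilon_j(h)2^{j-1}$ with $\varepsilon_j(h)\in\{0,1\}$ and $s(h)=\sum_j\varepsilon_j(h)$; $h\preceq\ell$ means $\varepsilon_j(h)\leqslant\varepsilon_j(\ell)$ for all $j$. An $N$-tuple of nonzero integers $(z_h)$ is reduced if $\gcd(z_h,z_\ell)=1$ whenever $h,\ell$ are incomparable for $\preceq$. Note $z_{2^{j-1}}$ is the entry with index $h=2^{j-1}$. *)

theory Defs
  imports Main "HOL-Library.FuncSet"
begin

definition eps :: "nat \<Rightarrow> nat \<Rightarrow> nat" where
  "eps j h = (h div 2 ^ (j - 1)) mod 2"

definition digit_sum :: "nat \<Rightarrow> nat \<Rightarrow> nat" where
  "digit_sum n h = (\<Sum>j=1..n. eps j h)"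

definition preceq :: "nat \<Rightarrow> nat \<Rightarrow> bool" where
  "preceq h l \<longleftrightarrow> (\<forall>j\<ge>1. eps j h \<le> eps j l)"

definition reduced :: "nat \<Rightarrow> (nat \<Rightarrow> int) \<Rightarrow> bool" where
  "reduced N z \<longleftrightarrow> (\<forall>h\<in>{1..N}. \<forall>l\<in>{1..N}.
      \<not> preceq h l \<and> \<not> preceq l h \<longrightarrow> gcd (z h) (z l) = 1)"

text \<open>Tuples indexed by {1..n} are extensional functions.\<close>
definition W_set :: "nat \<Rightarrow> ((nat \<Rightarrow> int) \<times> (nat \<Rightarrow> int)) set" where
  "W_set n = {(x, y). x \<in> {1..n} \<rightarrow>\<^sub>E UNIV \<and> y \<in> {1..n} \<rightarrow>\<^sub>E UNIV \<and>
      (\<Prod>i=1..n. y i) \<noteq> 0 \<and>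
      (\<Sum>i=1..n. x i * (\<Prod>j\<in>{1..n} - {i}. y j)) = 0}"

definition A_set :: "nat \<Rightarrow> ((nat \<Rightarrow> int) \<times> (nat \<Rightarrow> int)) set" where
  "A_set n = {(x', z). x' \<in> {1..n} \<rightarrow>\<^sub>E UNIV \<and>
      z \<in> {1..2^n - 1} \<rightarrow>\<^sub>E (UNIV - {0}) \<and>
      reduced (2^n - 1) z \<and>
      (\<forall>h\<in>{1..2^n - 1}. digit_sum n h \<ge> 2 \<longrightarrow> z h > 0) \<and>
      (\<Sum>j=1..n. (\<Prod>h=1..2^n - 1. z h ^ (1 - eps j h)) * z (2^(j-1)) * x' j) = 0}"

definition the_map :: "nat \<Rightarrow> (nat \<Rightarrow> int) \<times> (nat \<Rightarrow> int) \<Rightarrow> (nat \<Rightarrow> int) \<times> (nat \<Rightarrow> int)" where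
  "the_map n = (\<lambda>(x', z).
     ((\<lambda>j\<in>{1..n}. z (2^(j-1)) * x' j),
      (\<lambda>j\<in>{1..n}. \<Prod>h=1..2^n - 1. z h ^ eps j h)))"

end

theory Submission
  imports Defs "HOL-Computational_Algebra.Primes"
begin

text \<open>
  Fix a prime \<open>q\<close> and let \<open>a\<^sub>h\<close> be the \<open>q\<close>-adic valuation of \<open>z\<^sub>h\<close>. Since
  \<open>y\<^sub>j = \<Prod>\<^sub>h z\<^sub>h\<^bsup>\<epsilon>\<^sub>j(h)\<^esup>\<close>, the valuation of \<open>y\<^sub>j\<close> is \<open>v\<^sub>j = \<Sum>\<^sub>h \<epsilon>\<^sub>j(h) a\<^sub>h\<close>. Reducedness says exactly
  that the support of \<open>a\<close> is a chain for \<open>\<preceq>\<close>, and on such \<open>a\<close> the map \<open>a \<mapsto> v\<close> is a bijection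
  onto \<open>\<nat>\<^sup>n\<close>: the upper sums \<open>\<Sum>\<^bsub>l \<succeq> h\<^esub> a\<^sub>l\<close> are the minima of the \<open>v\<^sub>j\<close> over the binary digits
  of \<open>h\<close>, which recovers \<open>a\<close>, and conversely \<open>a\<^sub>h\<close> can be taken to count the levels \<open>t\<close> at which
  \<open>{j. t \<le> v\<^sub>j}\<close> has binary code \<open>h\<close>. The signs are carried by the entries \<open>z\<^sub>h\<close> with \<open>s(h) = 1\<close>.
  The linear equation of \<open>W\<^sub>n\<close> is the equation of \<open>A\<^sub>n\<close> multiplied by \<open>\<Prod>\<^sub>h z\<^sub>h\<^bsup>s(h)-1\<^esup> \<noteq> 0\<close>, and
  comparing valuations in it gives the divisibility \<open>z\<^bsub>2\<^sup>j\<^sup>-\<^sup>1\<^esub> | x\<^sub>j\<close> needed for surjectivity.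
\<close>

lemma eps_eq_bit: "eps j h = of_bool (bit h (j - 1))"
  unfolding eps_def bit_nat_def by (auto simp: odd_iff_mod_2_eq_one even_iff_mod_2_eq_zero)

lemma eps_0_or_1: "eps j h = 0 \<or> eps j h = 1"
  by (simp add: eps_eq_bit)

lemma eps_0_right [simp]: "eps j 0 = 0"
  by (simp add: eps_def)

lemma eps_eq_0_if_less_power:
  assumes "h < 2 ^ n" "n < j"
  shows "eps j h = 0"
proof -
  have "(2::nat) ^ n \<le> 2 ^ (j - 1)" using assms(2) by (intro power_increasing) auto
  then have "h div 2 ^ (j - 1) = 0" using assms(1) by (intro div_less) linarith
  then show ?thesis by (simp add: eps_def)
qed

lemma eq_if_eps_eq: "(\<And>j. j \<ge> 1 \<Longrightarrow> eps j h = eps j l) \<Longrightarrow> h = l"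
proof (rule bit_eqI)
  fix k assume "\<And>j. j \<ge> 1 \<Longrightarrow> eps j h = eps j l"
  from this[of "Suc k"] show "bit h k = bit l k" by (simp add: eps_eq_bit of_bool_eq_iff)
qed

lemma eps_power_of_2: "i \<ge> 1 \<Longrightarrow> j \<ge> 1 \<Longrightarrow> eps i (2 ^ (j - 1)) = of_bool (i = j)"
  by (auto simp: eps_eq_bit bit_exp_iff)

lemma preceq_refl: "preceq h h"
  by (simp add: preceq_def)

lemma preceq_imp_le:
  assumes "preceq g l"
  shows "g \<le> l"
proof -
  have "and g l = g"
  proof (rule bit_eqI)
    fix k
    have "eps (Suc k) g \<le> eps (Suc k) l" using assms by (simp add: preceq_def)
    then show "bit (and g l) k = bit g k" by (auto simp: bit_and_iff eps_eq_bit)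
  qed
  moreover have "int (and g l) \<le> int l" by (simp add: of_nat_and_eq)
  ultimately show ?thesis by linarith
qed

lemma power_of_2_mem:
  assumes "j \<in> {1..n}"
  shows "(2::nat) ^ (j - 1) \<in> {1..2 ^ n - 1}"
proof -
  have "(2::nat) ^ (j - 1) < 2 ^ n" using assms by (intro power_strict_increasing) auto
  then have "(2::nat) ^ (j - 1) \<le> 2 ^ n - 1" by linarith
  then show ?thesis by simp
qed

lemma less_power_if_mem: "h \<in> {1..2 ^ n - 1} \<Longrightarrow> h < (2::nat) ^ n"
  using one_le_power[of 2 n] by auto

lemma mem_if_eps_eq_1:
  assumes "h \<in> {1..2 ^ n - 1}" "eps j h = 1" "j \<ge> 1"
  shows "j \<in> {1..n}"
  using eps_eq_0_if_less_power[OF less_power_if_mem[OF assms(1)], of j] assms by force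

lemma ex_eps_eq_1:
  assumes "h \<in> {1..2 ^ n - 1}"
  shows "\<exists>j\<in>{1..n}. eps j h = 1"
proof (rule ccontr)
  assume "\<not> ?thesis"
  then have "\<And>j. j \<ge> 1 \<Longrightarrow> eps j h = eps j 0"
    using eps_eq_0_if_less_power[OF less_power_if_mem[OF assms]] eps_0_or_1[of _ h]
    by (fastforce simp: not_le)
  then have "h = 0" by (rule eq_if_eps_eq)
  with assms show False by simp
qed

lemma digit_sum_power_of_2:
  assumes "j \<in> {1..n}"
  shows "digit_sum n (2 ^ (j - 1)) = 1"
proof -
  have "digit_sum n (2 ^ (j - 1)) = (\<Sum>i=1..n. of_bool (i = j))"
    unfolding digit_sum_def by (rule sum.cong) (use assms eps_power_of_2[of _ j] in auto)
  also have "\<dots> = 1" using assms by (simp add: sum.delta)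
  finally show ?thesis .
qed

lemma digit_sum_ge_1:
  assumes "h \<in> {1..2 ^ n - 1}"
  shows "digit_sum n h \<ge> 1"
proof -
  obtain j where j: "j \<in> {1..n}" "eps j h = 1" using ex_eps_eq_1[OF assms] by blast
  have "eps j h \<le> (\<Sum>j=1..n. eps j h)" by (rule member_le_sum) (use j in auto)
  then show ?thesis using j by (simp add: digit_sum_def)
qed

lemma digit_sum_ge_2:
  assumes h: "h \<in> {1..2 ^ n - 1}" and j: "j \<in> {1..n}" "eps j h = 1" and "h \<noteq> 2 ^ (j - 1)"
  shows "digit_sum n h \<ge> 2"
proof -
  have "\<exists>i\<ge>1. i \<noteq> j \<and> eps i h = 1"
  proof (rule ccontr)
    assume "\<not> ?thesis"
    then have "\<And>i. i \<ge> 1 \<Longrightarrow> eps i h = eps i (2 ^ (j - 1))"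
      using j eps_0_or_1[of _ h] eps_power_of_2[of _ j] by auto
    then have "h = 2 ^ (j - 1)" by (rule eq_if_eps_eq)
    with assms(4) show False ..
  qed
  then obtain i where i: "i \<ge> 1" "i \<noteq> j" "eps i h = 1" by blast
  have "(\<Sum>k\<in>{i, j}. eps k h) \<le> (\<Sum>k=1..n. eps k h)"
    by (rule sum_mono2) (use i j mem_if_eps_eq_1[OF h i(3,1)] in auto)
  then show ?thesis using i j by (simp add: digit_sum_def)
qed

lemma digit_sum_le_1_imp_power_of_2:
  assumes "h \<in> {1..2 ^ n - 1}" "digit_sum n h < 2"
  obtains j where "j \<in> {1..n}" "h = 2 ^ (j - 1)"
  using ex_eps_eq_1[OF assms(1)] digit_sum_ge_2[OF assms(1)] assms(2) by force

definition chain_supported :: "nat \<Rightarrow> (nat \<Rightarrow> nat) \<Rightarrow> bool" where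
  "chain_supported n a \<longleftrightarrow> (\<forall>h\<in>{1..2 ^ n - 1}. \<forall>l\<in>{1..2 ^ n - 1}.
      a h > 0 \<longrightarrow> a l > 0 \<longrightarrow> preceq h l \<or> preceq l h)"

definition bit_sum :: "nat \<Rightarrow> (nat \<Rightarrow> nat) \<Rightarrow> nat \<Rightarrow> nat" where
  "bit_sum n a j = (\<Sum>l=1..2 ^ n - 1. eps j l * a l)"

definition upper_sum :: "nat \<Rightarrow> (nat \<Rightarrow> nat) \<Rightarrow> nat \<Rightarrow> nat" where
  "upper_sum N a h = (\<Sum>l\<in>{l\<in>{1..N}. preceq h l}. a l)"

lemma eps_eq_1_if_preceq:
  assumes "preceq h l" "eps j h = 1" "j \<ge> 1"
  shows "eps j l = 1"
  using assms eps_0_or_1[of j l] unfolding preceq_def by force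

lemma upper_sum_le_bit_sum:
  assumes "eps j h = 1" "j \<ge> 1"
  shows "upper_sum (2 ^ n - 1) a h \<le> bit_sum n a j"
proof -
  have "upper_sum (2 ^ n - 1) a h = (\<Sum>l\<in>{l\<in>{1..2 ^ n - 1}. preceq h l}. eps j l * a l)"
    unfolding upper_sum_def by (rule sum.cong) (use eps_eq_1_if_preceq assms in auto)
  also have "\<dots> \<le> bit_sum n a j"
    unfolding bit_sum_def by (rule sum_mono2) auto
  finally show ?thesis .
qed

text \<open>Take for \<open>j\<close> a digit of \<open>h\<close> missing from the largest support element not above \<open>h\<close>.\<close>
lemma chain_supported_obtain_separating_digit:
  assumes ch: "chain_supported n a" and h: "h \<in> {1..2 ^ n - 1}"
  obtains j where "j \<in> {1..n}" "eps j h = 1"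
    "\<And>l. l \<in> {1..2 ^ n - 1} \<Longrightarrow> a l > 0 \<Longrightarrow> eps j l = 1 \<Longrightarrow> preceq h l"
proof (cases "{l\<in>{1..2 ^ n - 1}. a l > 0 \<and> \<not> preceq h l} = {}")
  case True
  then show ?thesis using ex_eps_eq_1[OF h] that by blast
next
  case False
  define G where "G = {l\<in>{1..2 ^ n - 1}. a l > 0 \<and> \<not> preceq h l}"
  define g where "g = Max G"
  have "finite G" "G \<noteq> {}" using False unfolding G_def by auto
  then have gG: "g \<in> G" and g_max: "\<And>l. l \<in> G \<Longrightarrow> l \<le> g"
    unfolding g_def by auto
  then obtain j where "j \<ge> 1" "\<not> eps j h \<le> eps j g"
    by (auto simp: G_def preceq_def)
  then have j: "j \<ge> 1" "eps j h = 1" "eps j g = 0"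
    using eps_0_or_1[of j h] eps_0_or_1[of j g] by auto
  show ?thesis
  proof (rule that)
    show "j \<in> {1..n}" by (rule mem_if_eps_eq_1[OF h j(2,1)])
    show "eps j h = 1" by (fact j(2))
    fix l assume l: "l \<in> {1..2 ^ n - 1}" "a l > 0" "eps j l = 1"
    show "preceq h l"
    proof (rule ccontr)
      assume "\<not> preceq h l"
      then have "l \<le> g" using l by (intro g_max) (simp add: G_def)
      have "preceq l g \<or> preceq g l" using ch l gG unfolding chain_supported_def G_def by blast
      then show False
      proof
        assume "preceq l g"
        then show False using l j unfolding preceq_def by force
      next
        assume "preceq g l"
        then have "g = l" using \<open>l \<le> g\<close> preceq_imp_le by force
        then show False using l j by simp
      qed
    qed
  qed
qed

lemma chain_supported_upper_sum_eq_bit_sum: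
  assumes ch: "chain_supported n a" and h: "h \<in> {1..2 ^ n - 1}"
  obtains j where "j \<in> {1..n}" "eps j h = 1" "bit_sum n a j = upper_sum (2 ^ n - 1) a h"
proof -
  obtain j where j: "j \<in> {1..n}" "eps j h = 1"
    and sees: "\<And>l. l \<in> {1..2 ^ n - 1} \<Longrightarrow> a l > 0 \<Longrightarrow> eps j l = 1 \<Longrightarrow> preceq h l"
    using chain_supported_obtain_separating_digit[OF ch h] by blast
  have "bit_sum n a j = (\<Sum>l=1..2 ^ n - 1. if preceq h l then a l else 0)"
    unfolding bit_sum_def
  proof (rule sum.cong)
    fix l :: nat assume "l \<in> {1..2 ^ n - 1}"
    then show "eps j l * a l = (if preceq h l then a l else 0)"
      using sees[of l] eps_eq_1_if_preceq[of h l j] eps_0_or_1[of j l] j by auto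
  qed simp
  also have "\<dots> = upper_sum (2 ^ n - 1) a h"
    unfolding upper_sum_def by (rule sum.inter_filter[symmetric]) simp
  finally show ?thesis using j that by blast
qed

lemma eq_if_upper_sum_eq:
  fixes a b :: "nat \<Rightarrow> nat"
  assumes "\<And>h. h \<in> {1..N} \<Longrightarrow> upper_sum N a h = upper_sum N b h"
  shows "h \<in> {1..N} \<Longrightarrow> a h = b h"
proof (induction "N - h" arbitrary: h rule: less_induct)
  case less
  let ?S = "{l\<in>{1..N}. preceq h l \<and> l \<noteq> h}"
  have upper: "{l\<in>{1..N}. preceq h l} = insert h ?S" using less.prems preceq_refl by auto
  have "(\<Sum>l\<in>?S. a l) = (\<Sum>l\<in>?S. b l)"
  proof (rule sum.cong)
    fix l assume "l \<in> ?S"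
    then have "N - l < N - h" "l \<in> {1..N}" using preceq_imp_le[of h l] by auto
    then show "a l = b l" using less.hyps by blast
  qed simp
  moreover have "a h + (\<Sum>l\<in>?S. a l) = b h + (\<Sum>l\<in>?S. b l)"
    using assms[OF less.prems] unfolding upper_sum_def upper by simp
  ultimately show ?case by linarith
qed

lemma chain_supported_eq_if_bit_sum_eq:
  assumes "chain_supported n a" "chain_supported n b"
    and bit_sum_eq: "\<And>j. j \<in> {1..n} \<Longrightarrow> bit_sum n a j = bit_sum n b j"
    and "h \<in> {1..2 ^ n - 1}"
  shows "a h = b h"
proof (rule eq_if_upper_sum_eq[OF _ assms(4)])
  fix h :: nat assume h: "h \<in> {1..2 ^ n - 1}"
  obtain i where i: "i \<in> {1..n}" "eps i h = 1" "bit_sum n a i = upper_sum (2 ^ n - 1) a h"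
    by (rule chain_supported_upper_sum_eq_bit_sum[OF assms(1) h])
  obtain j where j: "j \<in> {1..n}" "eps j h = 1" "bit_sum n b j = upper_sum (2 ^ n - 1) b h"
    by (rule chain_supported_upper_sum_eq_bit_sum[OF assms(2) h])
  have "upper_sum (2 ^ n - 1) a h \<le> upper_sum (2 ^ n - 1) b h"
    using upper_sum_le_bit_sum[of j h n a] j bit_sum_eq by simp
  moreover have "upper_sum (2 ^ n - 1) b h \<le> upper_sum (2 ^ n - 1) a h"
    using upper_sum_le_bit_sum[of i h n b] i bit_sum_eq by simp
  ultimately show "upper_sum (2 ^ n - 1) a h = upper_sum (2 ^ n - 1) b h" by simp
qed

text \<open>
  \<open>level n v t\<close> is the binary code of \<open>{j. t \<le> v j}\<close>; these sets decrease in \<open>t\<close>, so the codes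
  of the levels form a chain.
\<close>
definition level :: "nat \<Rightarrow> (nat \<Rightarrow> nat) \<Rightarrow> nat \<Rightarrow> nat" where
  "level n v t = horner_sum of_bool 2 (map (\<lambda>i. t \<le> v (Suc i)) [0..<n])"

definition level_count :: "nat \<Rightarrow> (nat \<Rightarrow> nat) \<Rightarrow> nat \<Rightarrow> nat" where
  "level_count n v h = card {t\<in>{1..(\<Sum>j=1..n. v j)}. level n v t = h}"

lemma eps_level: "j \<in> {1..n} \<Longrightarrow> eps j (level n v t) = of_bool (t \<le> v j)"
  unfolding level_def eps_eq_bit by (auto simp: bit_horner_sum_bit_iff)

lemma level_less_power: "level n v t < 2 ^ n"
  unfolding level_def using horner_sum_bound[of "map (\<lambda>i. t \<le> v (Suc i)) [0..<n]"] by simp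

lemma level_antimono: "t \<le> t' \<Longrightarrow> preceq (level n v t') (level n v t)"
  unfolding preceq_def
proof (intro allI impI)
  fix k :: nat assume "t \<le> t'" "1 \<le> k"
  then show "eps k (level n v t') \<le> eps k (level n v t)"
    using eps_level[of k n v] eps_eq_0_if_less_power[OF level_less_power, of n k v t']
    by (cases "k \<le> n") auto
qed

lemma chain_supported_level_count: "chain_supported n (level_count n v)"
  unfolding chain_supported_def
proof (intro ballI impI)
  fix h l assume "level_count n v h > 0" "level_count n v l > 0"
  then obtain t t' where "level n v t = h" "level n v t' = l"
    unfolding level_count_def card_gt_0_iff by auto
  then show "preceq h l \<or> preceq l h"
    using level_antimono[of t t' n v] level_antimono[of t' t n v] by (cases "t \<le> t'") auto
qed

lemma bit_sum_level_count:
  assumes j: "j \<in> {1..n}"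
  shows "bit_sum n (level_count n v) j = v j"
proof -
  define T where "T = (\<Sum>j=1..n. v j)"
  have "v j \<le> T" unfolding T_def by (rule member_le_sum) (use j in auto)
  have eps_level_j: "eps j (level n v t) = of_bool (t \<le> v j)" for t
    by (rule eps_level[OF j])
  have level_mem: "level n v t \<in> {1..2 ^ n - 1}" if "t \<le> v j" for t
  proof -
    have "level n v t \<noteq> 0"
    proof
      assume "level n v t = 0"
      then show False using eps_level_j[of t] that by simp
    qed
    then show ?thesis using level_less_power[of n v t] by simp
  qed
  have count: "eps j h * level_count n v h
      = (\<Sum>t\<in>{1..T}. if level n v t = h then eps j h else 0)" for h
  proof -
    have "level_count n v h = (\<Sum>t\<in>{1..T}. if level n v t = h then 1 else 0)"
      unfolding level_count_def T_def[symmetric] by (simp add: sum.If_cases Int_def)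
    then show ?thesis
      by (simp add: sum_distrib_left if_distrib[where f="\<lambda>x. eps j h * x"] cong: if_cong)
  qed
  have "bit_sum n (level_count n v) j
      = (\<Sum>h=1..2 ^ n - 1. \<Sum>t\<in>{1..T}. if level n v t = h then eps j h else 0)"
    unfolding bit_sum_def count ..
  also have "\<dots> = (\<Sum>t\<in>{1..T}. \<Sum>h=1..2 ^ n - 1. if level n v t = h then eps j h else 0)"
    by (rule sum.swap)
  also have "\<dots> = (\<Sum>t\<in>{1..T}. if t \<le> v j then 1 else 0)"
  proof (rule sum.cong)
    fix t
    show "(\<Sum>h=1..2 ^ n - 1. if level n v t = h then eps j h else 0) = (if t \<le> v j then 1 else 0)"
      using eps_level_j[of t] level_mem[of t] by (simp add: sum.delta')
  qed simp
  also have "\<dots> = card {t\<in>{1..T}. t \<le> v j}"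
    by (simp add: sum.If_cases Int_def)
  also have "{t\<in>{1..T}. t \<le> v j} = {1..v j}" using \<open>v j \<le> T\<close> by auto
  finally show ?thesis by simp
qed

lemma level_count_power_of_2_le:
  assumes "j \<in> {1..n}" "i \<in> {1..n}" "i \<noteq> j"
  shows "level_count n v (2 ^ (j - 1)) \<le> v j - v i"
proof -
  have "{t\<in>{1..(\<Sum>j=1..n. v j)}. level n v t = 2 ^ (j - 1)} \<subseteq> {Suc (v i)..v j}"
  proof
    fix t assume "t \<in> {t\<in>{1..(\<Sum>j=1..n. v j)}. level n v t = 2 ^ (j - 1)}"
    then have "eps j (level n v t) = 1" "eps i (level n v t) = 0"
      using eps_power_of_2[of j j] eps_power_of_2[of i j] assms by auto
    then show "t \<in> {Suc (v i)..v j}"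
      using eps_level[OF assms(1)] eps_level[OF assms(2)] by (auto simp: of_bool_def split: if_splits)
  qed
  then have "level_count n v (2 ^ (j - 1)) \<le> card {Suc (v i)..v j}"
    unfolding level_count_def by (intro card_mono) auto
  then show ?thesis by simp
qed

definition y_of :: "nat \<Rightarrow> (nat \<Rightarrow> int) \<Rightarrow> nat \<Rightarrow> int" where
  "y_of n z j = (\<Prod>h=1..2 ^ n - 1. z h ^ eps j h)"

lemma the_map_eq:
  "the_map n (x', z) = ((\<lambda>j\<in>{1..n}. z (2 ^ (j - 1)) * x' j), (\<lambda>j\<in>{1..n}. y_of n z j))"
  unfolding the_map_def y_of_def by simp

lemma y_of_nonzero: "(\<forall>h\<in>{1..2 ^ n - 1}. z h \<noteq> 0) \<Longrightarrow> y_of n z j \<noteq> 0"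
  unfolding y_of_def by (simp add: prod_zero_iff)

lemma multiplicity_y_of:
  assumes "prime q" and nz: "\<forall>h\<in>{1..2 ^ n - 1}. z h \<noteq> 0"
  shows "multiplicity q (y_of n z j) = bit_sum n (\<lambda>h. multiplicity q (z h)) j"
proof -
  have "multiplicity q (y_of n z j) = (\<Sum>h=1..2 ^ n - 1. multiplicity q (z h ^ eps j h))"
    unfolding y_of_def by (rule prime_elem_multiplicity_prod_distrib) (use assms in auto)
  also have "\<dots> = bit_sum n (\<lambda>h. multiplicity q (z h)) j"
    unfolding bit_sum_def
    by (rule sum.cong) (use assms in \<open>auto simp: prime_elem_multiplicity_power_distrib\<close>)
  finally show ?thesis .
qed

lemma sgn_y_of:
  assumes nz: "\<forall>h\<in>{1..2 ^ n - 1}. z h \<noteq> 0"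
    and pos: "\<forall>h\<in>{1..2 ^ n - 1}. digit_sum n h \<ge> 2 \<longrightarrow> z h > 0"
    and j: "j \<in> {1..n}"
  shows "sgn (y_of n z j) = sgn (z (2 ^ (j - 1)))"
proof -
  let ?p = "(2::nat) ^ (j - 1)"
  have "eps j ?p = 1" using eps_power_of_2[of j j] j by simp
  then have y_split: "y_of n z j = z ?p * (\<Prod>h\<in>{1..2 ^ n - 1} - {?p}. z h ^ eps j h)"
    unfolding y_of_def by (subst prod.remove[OF _ power_of_2_mem[OF j]]) simp_all
  have "(\<Prod>h\<in>{1..2 ^ n - 1} - {?p}. z h ^ eps j h) > 0"
  proof (rule prod_pos)
    fix h assume h: "h \<in> {1..2 ^ n - 1} - {?p}"
    show "z h ^ eps j h > 0"
    proof (cases "eps j h = 1")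
      case True
      then have "digit_sum n h \<ge> 2" using digit_sum_ge_2[of h n j] h j by auto
      then show ?thesis using pos h True by auto
    next
      case False
      then show ?thesis using eps_0_or_1[of j h] by auto
    qed
  qed
  then show ?thesis unfolding y_split by (simp add: sgn_mult)
qed

lemma chain_supported_multiplicity_if_reduced:
  assumes "reduced (2 ^ n - 1) z" and "prime q"
  shows "chain_supported n (\<lambda>h. multiplicity q (z h))"
  unfolding chain_supported_def
proof (intro ballI impI)
  fix h l assume hl: "h \<in> {1..2 ^ n - 1}" "l \<in> {1..2 ^ n - 1}"
    and "multiplicity q (z h) > 0" "multiplicity q (z l) > 0"
  then have "q dvd gcd (z h) (z l)" using multiplicity_dvd'[of 1 q] by auto
  moreover have "\<not> is_unit q" using \<open>prime q\<close> not_prime_unit by blast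
  ultimately have "gcd (z h) (z l) \<noteq> 1" by metis
  then show "preceq h l \<or> preceq l h" using assms(1) hl unfolding reduced_def by blast
qed

text \<open>\<open>\<Prod>\<^sub>k\<^sub>\<noteq>\<^sub>i y\<^sub>k\<close> contains \<open>z\<^sub>h\<close> with exponent \<open>s(h) - \<epsilon>\<^sub>i(h) = (s(h) - 1) + (1 - \<epsilon>\<^sub>i(h))\<close>.\<close>
lemma prod_y_of_remove:
  assumes nz: "\<forall>h\<in>{1..2 ^ n - 1}. z h \<noteq> 0" and i: "i \<in> {1..n}"
  shows "(\<Prod>k\<in>{1..n} - {i}. y_of n z k) =
     (\<Prod>h=1..2 ^ n - 1. z h ^ (digit_sum n h - 1)) * (\<Prod>h=1..2 ^ n - 1. z h ^ (1 - eps i h))"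
proof -
  have "(\<Prod>k\<in>{1..n} - {i}. y_of n z k) = (\<Prod>h=1..2 ^ n - 1. z h ^ (\<Sum>k\<in>{1..n} - {i}. eps k h))"
    unfolding y_of_def by (subst prod.swap) (simp add: power_sum)
  also have "\<dots> = (\<Prod>h=1..2 ^ n - 1. z h ^ (digit_sum n h - 1) * z h ^ (1 - eps i h))"
  proof (rule prod.cong)
    fix h :: nat assume h: "h \<in> {1..2 ^ n - 1}"
    have "(\<Sum>k\<in>{1..n} - {i}. eps k h) = digit_sum n h - eps i h"
      unfolding digit_sum_def by (subst sum_diff1_nat) (use i in simp)
    also have "\<dots> = (digit_sum n h - 1) + (1 - eps i h)"
      using digit_sum_ge_1[OF h] eps_0_or_1[of i h] by auto
    finally show "z h ^ (\<Sum>k\<in>{1..n} - {i}. eps k h) = z h ^ (digit_sum n h - 1) * z h ^ (1 - eps i h)"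
      by (simp add: power_add)
  qed simp
  finally show ?thesis by (simp add: prod.distrib)
qed

lemma W_sum_eq_A_sum:
  assumes "\<forall>h\<in>{1..2 ^ n - 1}. z h \<noteq> 0"
  shows "(\<Sum>i=1..n. z (2 ^ (i - 1)) * x' i * (\<Prod>k\<in>{1..n} - {i}. y_of n z k)) =
    (\<Prod>h=1..2 ^ n - 1. z h ^ (digit_sum n h - 1)) *
    (\<Sum>j=1..n. (\<Prod>h=1..2 ^ n - 1. z h ^ (1 - eps j h)) * z (2 ^ (j - 1)) * x' j)"
  unfolding sum_distrib_left
proof (rule sum.cong)
  fix i assume i: "i \<in> {1..n}"
  show "z (2 ^ (i - 1)) * x' i * (\<Prod>k\<in>{1..n} - {i}. y_of n z k) =
    (\<Prod>h=1..2 ^ n - 1. z h ^ (digit_sum n h - 1)) *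
    ((\<Prod>h=1..2 ^ n - 1. z h ^ (1 - eps i h)) * z (2 ^ (i - 1)) * x' i)"
    using prod_y_of_remove[OF assms i] by (simp add: ac_simps)
qed simp

lemma W_sum_eq_0_iff_A_sum_eq_0:
  assumes "\<forall>h\<in>{1..2 ^ n - 1}. z h \<noteq> 0"
  shows "(\<Sum>i=1..n. z (2 ^ (i - 1)) * x' i * (\<Prod>k\<in>{1..n} - {i}. y_of n z k)) = 0 \<longleftrightarrow>
    (\<Sum>j=1..n. (\<Prod>h=1..2 ^ n - 1. z h ^ (1 - eps j h)) * z (2 ^ (j - 1)) * x' j) = 0"
  using assms by (subst W_sum_eq_A_sum[OF assms]) (simp add: prod_zero_iff)

text \<open>
  In \<open>\<Sum>\<^sub>i x\<^sub>i \<Prod>\<^sub>k\<^sub>\<noteq>\<^sub>i y\<^sub>k = 0\<close> every term with \<open>i \<noteq> j\<close> is divisible by \<open>q\<^sup>E\<close> with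
  \<open>E = \<Sum>\<^sub>k v\<^sub>k - max\<^sub>k\<^sub>\<noteq>\<^sub>j v\<^sub>k\<close>, where \<open>v\<^sub>k\<close> is the valuation of \<open>y\<^sub>k\<close>; hence so is the \<open>j\<close>-th term.
\<close>
lemma multiplicity_gap_le_multiplicity:
  fixes x y :: "nat \<Rightarrow> int"
  assumes "2 \<le> n" and nz: "\<forall>k\<in>{1..n}. y k \<noteq> 0"
    and eq: "(\<Sum>i=1..n. x i * (\<Prod>k\<in>{1..n} - {i}. y k)) = 0"
    and j: "j \<in> {1..n}" and q: "prime q" and "x j \<noteq> 0"
  shows "\<exists>i\<in>{1..n}. i \<noteq> j \<and> multiplicity q (y j) - multiplicity q (y i) \<le> multiplicity q (x j)"
proof -
  define v where "v k = multiplicity q (y k)" for k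
  define J where "J = {1..n} - {j}"
  have "finite J" unfolding J_def by simp
  have "(if j = 1 then 2 else 1) \<in> J" using \<open>2 \<le> n\<close> j unfolding J_def by auto
  then have "J \<noteq> {}" by blast
  define M where "M = Max (v ` J)"
  have "M \<in> v ` J" unfolding M_def using \<open>finite J\<close> \<open>J \<noteq> {}\<close> by simp
  then obtain i where i: "i \<in> J" "v i = M" by auto
  have v_le_M: "v k \<le> M" if "k \<in> J" for k unfolding M_def using \<open>finite J\<close> that by simp
  define P where "P k = (\<Prod>l\<in>{1..n} - {k}. y l)" for k
  have P_nonzero: "P k \<noteq> 0" for k unfolding P_def using nz by (simp add: prod_zero_iff)
  have multiplicity_P: "multiplicity q (P k) = (\<Sum>l\<in>{1..n} - {k}. v l)" for k
    unfolding P_def v_def by (rule prime_elem_multiplicity_prod_distrib) (use q nz in auto)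
  have sum_v: "(\<Sum>l\<in>{1..n} - {k}. v l) + v k = (\<Sum>l=1..n. v l)" if "k \<in> {1..n}" for k
    using sum.remove[of "{1..n}" k v] that by simp
  define S where "S = (\<Sum>l\<in>J. v l)"
  have "M \<le> S" unfolding S_def using i \<open>finite J\<close> by (metis member_le_sum zero_le)
  define E where "E = S + v j - M"
  have "E \<le> multiplicity q (P k)" if k: "k \<in> J" for k
    using sum_v[of k] sum_v[OF j] v_le_M[OF k] k
    unfolding E_def S_def J_def multiplicity_P by auto
  then have "q ^ E dvd (\<Sum>k\<in>J. x k * P k)"
    by (intro dvd_sum dvd_mult multiplicity_dvd')
  moreover have "x j * P j = - (\<Sum>k\<in>J. x k * P k)"
    using eq sum.remove[of "{1..n}" j "\<lambda>i. x i * P i"] j unfolding P_def J_def by simp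
  ultimately have "q ^ E dvd x j * P j" by simp
  then have "E \<le> multiplicity q (x j * P j)"
    using multiplicity_geI[of "x j * P j" q E] \<open>x j \<noteq> 0\<close> P_nonzero q not_prime_unit by auto
  also have "\<dots> = multiplicity q (x j) + S"
    using prime_elem_multiplicity_mult_distrib[OF prime_imp_prime_elem[OF q] \<open>x j \<noteq> 0\<close> P_nonzero]
      multiplicity_P[of j] by (simp add: S_def J_def)
  finally have "v j - M \<le> multiplicity q (x j)" unfolding E_def using \<open>M \<le> S\<close> by linarith
  then show ?thesis using i unfolding J_def v_def by auto
qed

lemma A_setD:
  assumes "(x', z) \<in> A_set n"
  shows "x' \<in> {1..n} \<rightarrow>\<^sub>E UNIV" "z \<in> {1..2 ^ n - 1} \<rightarrow>\<^sub>E (UNIV - {0})"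
    "\<forall>h\<in>{1..2 ^ n - 1}. z h \<noteq> 0" "reduced (2 ^ n - 1) z"
    "\<forall>h\<in>{1..2 ^ n - 1}. digit_sum n h \<ge> 2 \<longrightarrow> z h > 0"
    "(\<Sum>j=1..n. (\<Prod>h=1..2 ^ n - 1. z h ^ (1 - eps j h)) * z (2 ^ (j - 1)) * x' j) = 0"
  using assms unfolding A_set_def by (auto simp: PiE_iff)

lemma the_map_mem_W_set:
  assumes "(x', z) \<in> A_set n"
  shows "the_map n (x', z) \<in> W_set n"
proof -
  note A = A_setD[OF assms]
  have "(\<Sum>i=1..n. z (2 ^ (i - 1)) * x' i * (\<Prod>k\<in>{1..n} - {i}. y_of n z k)) = 0"
    using A(6) W_sum_eq_0_iff_A_sum_eq_0[OF A(3)] by blast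
  moreover have "(\<Prod>j=1..n. y_of n z j) \<noteq> 0"
    using y_of_nonzero[of n z, OF A(3)] by (simp add: prod_zero_iff)
  ultimately show ?thesis unfolding the_map_eq W_set_def by simp
qed

lemma eq_if_y_of_eq:
  assumes z: "\<forall>h\<in>{1..2 ^ n - 1}. z h \<noteq> 0" "reduced (2 ^ n - 1) z"
      "\<forall>h\<in>{1..2 ^ n - 1}. digit_sum n h \<ge> 2 \<longrightarrow> z h > 0"
    and w: "\<forall>h\<in>{1..2 ^ n - 1}. w h \<noteq> 0" "reduced (2 ^ n - 1) w"
      "\<forall>h\<in>{1..2 ^ n - 1}. digit_sum n h \<ge> 2 \<longrightarrow> w h > 0"
    and y_of_eq: "\<And>j. j \<in> {1..n} \<Longrightarrow> y_of n z j = y_of n w j"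
    and h: "h \<in> {1..2 ^ n - 1}"
  shows "z h = w h"
proof -
  have "multiplicity q (z h) = multiplicity q (w h)" if q: "prime q" for q
  proof (rule chain_supported_eq_if_bit_sum_eq[OF _ _ _ h])
    show "chain_supported n (\<lambda>h. multiplicity q (z h))"
      by (rule chain_supported_multiplicity_if_reduced[OF z(2) q])
    show "chain_supported n (\<lambda>h. multiplicity q (w h))"
      by (rule chain_supported_multiplicity_if_reduced[OF w(2) q])
    fix j assume "j \<in> {1..n}"
    then show "bit_sum n (\<lambda>h. multiplicity q (z h)) j = bit_sum n (\<lambda>h. multiplicity q (w h)) j"
      using multiplicity_y_of[OF q z(1), of j] multiplicity_y_of[OF q w(1), of j] y_of_eq by simp
  qed
  then have "normalize (z h) = normalize (w h)"
    using z(1) w(1) h by (intro multiplicity_eq_imp_eq) auto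
  then have abs_eq: "\<bar>z h\<bar> = \<bar>w h\<bar>" by simp
  have "sgn (z h) = sgn (w h)"
  proof (cases "digit_sum n h \<ge> 2")
    case True
    then show ?thesis using z(3) w(3) h by simp
  next
    case False
    obtain j where j: "j \<in> {1..n}" and "h = 2 ^ (j - 1)"
      by (rule digit_sum_le_1_imp_power_of_2[OF h]) (use False in simp)
    then show ?thesis using sgn_y_of[OF z(1,3) j] sgn_y_of[OF w(1,3) j] y_of_eq[OF j] by simp
  qed
  then show ?thesis using abs_eq by (metis sgn_mult_abs)
qed

lemma inj_on_the_map: "inj_on (the_map n) (A_set n)"
proof (rule inj_onI, clarify)
  fix x' z x'' w assume a: "(x', z) \<in> A_set n" and b: "(x'', w) \<in> A_set n"
    and eq: "the_map n (x', z) = the_map n (x'', w)"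
  note A = A_setD[OF a] and B = A_setD[OF b]
  from eq have x_eq: "(\<lambda>j\<in>{1..n}. z (2 ^ (j - 1)) * x' j) = (\<lambda>j\<in>{1..n}. w (2 ^ (j - 1)) * x'' j)"
    and y_eq: "(\<lambda>j\<in>{1..n}. y_of n z j) = (\<lambda>j\<in>{1..n}. y_of n w j)"
    unfolding the_map_eq by auto
  have "y_of n z j = y_of n w j" if "j \<in> {1..n}" for j
    using fun_cong[OF y_eq, of j] that by simp
  then have "z = w"
    by (intro PiE_ext[OF A(2) B(2)] eq_if_y_of_eq[OF A(3-5) B(3-5)])
  moreover have "x' = x''"
  proof (rule PiE_ext[OF A(1) B(1)])
    fix j assume j: "j \<in> {1..n}"
    have "z (2 ^ (j - 1)) * x' j = w (2 ^ (j - 1)) * x'' j"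
      using fun_cong[OF x_eq, of j] j by simp
    then show "x' j = x'' j" using \<open>z = w\<close> A(3) power_of_2_mem[OF j] by simp
  qed
  ultimately show "x' = x'' \<and> z = w" by simp
qed

definition z_sign :: "nat \<Rightarrow> (nat \<Rightarrow> int) \<Rightarrow> nat \<Rightarrow> int" where
  "z_sign n y h = (\<Prod>k=1..n. if h = 2 ^ (k - 1) then sgn (y k) else 1)"

definition z_abs :: "nat \<Rightarrow> (nat \<Rightarrow> int) \<Rightarrow> nat \<Rightarrow> int" where
  "z_abs n y h = (\<Prod>q\<in>prime_factors (\<Prod>k=1..n. y k). q ^ level_count n (\<lambda>k. multiplicity q (y k)) h)"

definition z_of :: "nat \<Rightarrow> (nat \<Rightarrow> int) \<Rightarrow> nat \<Rightarrow> int" where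
  "z_of n y = (\<lambda>h\<in>{1..2 ^ n - 1}. z_sign n y h * z_abs n y h)"

lemma abs_z_sign: "(\<forall>k\<in>{1..n}. y k \<noteq> 0) \<Longrightarrow> \<bar>z_sign n y h\<bar> = 1"
  unfolding z_sign_def abs_prod by (rule prod.neutral) auto

lemma z_sign_power_of_2:
  assumes j: "j \<in> {1..n}"
  shows "z_sign n y (2 ^ (j - 1)) = sgn (y j)"
proof -
  have "z_sign n y (2 ^ (j - 1)) = (\<Prod>k=1..n. if k = j then sgn (y k) else 1)"
    unfolding z_sign_def
  proof (rule prod.cong)
    fix k assume "k \<in> {1..n}"
    then have "((2::nat) ^ (j - 1) = 2 ^ (k - 1)) = (k = j)" using j by (auto simp: power_inject_exp)
    then show "(if (2::nat) ^ (j - 1) = 2 ^ (k - 1) then sgn (y k) else 1) =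
        (if k = j then sgn (y k) else 1)" by simp
  qed simp
  also have "\<dots> = sgn (y j)" using j by (simp add: prod.delta)
  finally show ?thesis .
qed

lemma z_sign_eq_1:
  assumes "digit_sum n h \<ge> 2"
  shows "z_sign n y h = 1"
  unfolding z_sign_def
proof (rule prod.neutral, intro ballI)
  fix k assume "k \<in> {1..n}"
  then show "(if h = 2 ^ (k - 1) then sgn (y k) else 1) = 1"
    using assms digit_sum_power_of_2[of k n] by auto
qed

lemma z_abs_pos: "z_abs n y h > 0"
  unfolding z_abs_def
  by (intro prod_pos zero_less_power prime_gt_0_int in_prime_factors_imp_prime)

lemma multiplicity_z_abs:
  assumes q: "prime q" and ynz: "\<forall>k\<in>{1..n}. y k \<noteq> 0"
  shows "multiplicity q (z_abs n y h) = level_count n (\<lambda>k. multiplicity q (y k)) h"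
proof -
  define P where "P = prime_factors (\<Prod>k=1..n. y k)"
  define a where "a p = level_count n (\<lambda>k. multiplicity p (y k)) h" for p
  have "finite P" by (simp add: P_def)
  have P_prime: "prime p" if "p \<in> P" for p using that unfolding P_def by (rule in_prime_factors_imp_prime)
  have "multiplicity q (z_abs n y h) = (\<Sum>p\<in>P. multiplicity q (p ^ a p))"
    unfolding z_abs_def P_def[symmetric] a_def[symmetric]
    by (rule prime_elem_multiplicity_prod_distrib[OF prime_imp_prime_elem[OF q] _ \<open>finite P\<close>])
      (use P_prime in force)
  also have "\<dots> = (\<Sum>p\<in>P. if p = q then a q else 0)"
  proof (rule sum.cong)
    fix p assume "p \<in> P"
    then show "multiplicity q (p ^ a p) = (if p = q then a q else 0)"
      using multiplicity_distinct_prime_power[of q p "a p"] P_prime[of p] q by auto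
  qed simp
  also have "\<dots> = (if q \<in> P then a q else 0)" using \<open>finite P\<close> by (simp add: sum.delta')
  also have "\<dots> = a q"
  proof (cases "q \<in> P")
    case False
    have "multiplicity q (y k) = 0" if k: "k \<in> {1..n}" for k
    proof (rule not_dvd_imp_multiplicity_0)
      show "\<not> q dvd y k"
      proof
        assume "q dvd y k"
        then have "q dvd (\<Prod>k=1..n. y k)" using k by (blast intro: dvd_trans dvd_prodI)
        then have "q \<in> P" unfolding P_def using q ynz by (simp add: in_prime_factors_iff prod_zero_iff)
        with False show False ..
      qed
    qed
    then show ?thesis using False by (simp add: a_def level_count_def)
  qed simp
  finally show ?thesis by (simp add: a_def)
qed

lemma
  assumes "\<forall>k\<in>{1..n}. y k \<noteq> 0" and h: "h \<in> {1..2 ^ n - 1}"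
  shows z_of_nonzero: "z_of n y h \<noteq> 0"
    and multiplicity_z_of:
      "prime q \<Longrightarrow> multiplicity q (z_of n y h) = level_count n (\<lambda>k. multiplicity q (y k)) h"
    and z_of_pos: "digit_sum n h \<ge> 2 \<Longrightarrow> z_of n y h > 0"
proof -
  have z: "z_of n y h = z_sign n y h * z_abs n y h" using h by (simp add: z_of_def)
  show "z_of n y h \<noteq> 0" using abs_z_sign[OF assms(1), of h] z_abs_pos[of n y h] unfolding z by auto
  show "digit_sum n h \<ge> 2 \<Longrightarrow> z_of n y h > 0" using z_abs_pos[of n y h] z_sign_eq_1 unfolding z by simp
  assume q: "prime q"
  have "multiplicity q (z_of n y h) = multiplicity q \<bar>z_of n y h\<bar>"
    using multiplicity_normalize_right[of q "z_of n y h"] by simp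
  also have "\<bar>z_of n y h\<bar> = z_abs n y h"
    using abs_z_sign[OF assms(1), of h] z_abs_pos[of n y h] unfolding z by (simp add: abs_mult)
  finally show "multiplicity q (z_of n y h) = level_count n (\<lambda>k. multiplicity q (y k)) h"
    using multiplicity_z_abs[OF q assms(1)] by simp
qed

lemma reduced_z_of:
  assumes ynz: "\<forall>k\<in>{1..n}. y k \<noteq> 0"
  shows "reduced (2 ^ n - 1) (z_of n y)"
  unfolding reduced_def
proof (intro ballI impI)
  fix h l assume h: "h \<in> {1..2 ^ n - 1}" and l: "l \<in> {1..2 ^ n - 1}"
    and incomparable: "\<not> preceq h l \<and> \<not> preceq l h"
  show "gcd (z_of n y h) (z_of n y l) = 1"
  proof (rule ccontr)
    assume "gcd (z_of n y h) (z_of n y l) \<noteq> 1"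
    moreover have "gcd (z_of n y h) (z_of n y l) \<noteq> 0" using z_of_nonzero[OF ynz h] by simp
    ultimately obtain q where q: "prime q" "q dvd gcd (z_of n y h) (z_of n y l)"
      using prime_divisor_exists by (metis normalize_idem normalize_gcd is_unit_gcd_iff)
    then have "multiplicity q (z_of n y h) > 0" "multiplicity q (z_of n y l) > 0"
      using z_of_nonzero[OF ynz h] z_of_nonzero[OF ynz l]
      by (auto intro!: multiplicity_gt_zero_iff[THEN iffD2] simp: prime_elem_def)
    then have "preceq h l \<or> preceq l h"
      using chain_supported_level_count[of n "\<lambda>k. multiplicity q (y k)"] h l
        multiplicity_z_of[OF ynz h q(1)] multiplicity_z_of[OF ynz l q(1)]
      unfolding chain_supported_def by auto
    with incomparable show False by blast
  qed
qed

lemma y_of_z_of: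
  assumes ynz: "\<forall>k\<in>{1..n}. y k \<noteq> 0" and j: "j \<in> {1..n}"
  shows "y_of n (z_of n y) j = y j"
proof -
  have nz: "\<forall>h\<in>{1..2 ^ n - 1}. z_of n y h \<noteq> 0" using z_of_nonzero[OF ynz] by blast
  have pos: "\<forall>h\<in>{1..2 ^ n - 1}. digit_sum n h \<ge> 2 \<longrightarrow> z_of n y h > 0"
    using z_of_pos[OF ynz] by blast
  have "normalize (y_of n (z_of n y) j) = normalize (y j)"
  proof (rule multiplicity_eq_imp_eq[OF y_of_nonzero[OF nz] bspec[OF ynz j]])
    fix q :: int assume q: "prime q"
    have "multiplicity q (y_of n (z_of n y) j) = bit_sum n (level_count n (\<lambda>k. multiplicity q (y k))) j"
      unfolding multiplicity_y_of[OF q nz] bit_sum_def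
      by (rule sum.cong) (simp_all add: multiplicity_z_of[OF ynz _ q])
    also have "\<dots> = multiplicity q (y j)" by (rule bit_sum_level_count[OF j])
    finally show "multiplicity q (y_of n (z_of n y) j) = multiplicity q (y j)" .
  qed
  then have abs_eq: "\<bar>y_of n (z_of n y) j\<bar> = \<bar>y j\<bar>" by simp
  have "sgn (y_of n (z_of n y) j) = sgn (z_of n y (2 ^ (j - 1)))"
    by (rule sgn_y_of[OF nz pos j])
  also have "\<dots> = sgn (y j)"
    using power_of_2_mem[OF j] z_sign_power_of_2[OF j] z_abs_pos[of n y "2 ^ (j - 1)"]
    by (simp add: z_of_def sgn_mult)
  finally show ?thesis using abs_eq by (metis sgn_mult_abs)
qed

lemma W_setD:
  assumes "(x, y) \<in> W_set n"
  shows "x \<in> {1..n} \<rightarrow>\<^sub>E UNIV" "y \<in> {1..n} \<rightarrow>\<^sub>E UNIV" "\<forall>k\<in>{1..n}. y k \<noteq> 0"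
    "(\<Sum>i=1..n. x i * (\<Prod>k\<in>{1..n} - {i}. y k)) = 0"
  using assms unfolding W_set_def by (auto simp: prod_zero_iff)

lemma z_of_dvd:
  assumes "2 \<le> n" and xy: "(x, y) \<in> W_set n" and j: "j \<in> {1..n}"
  shows "z_of n y (2 ^ (j - 1)) dvd x j"
proof (cases "x j = 0")
  case False
  note W = W_setD[OF xy]
  show ?thesis
  proof (rule multiplicity_le_imp_dvd)
    show "z_of n y (2 ^ (j - 1)) \<noteq> 0" by (rule z_of_nonzero[OF W(3) power_of_2_mem[OF j]])
    fix q :: int assume q: "prime q"
    obtain i where i: "i \<in> {1..n}" "i \<noteq> j"
      "multiplicity q (y j) - multiplicity q (y i) \<le> multiplicity q (x j)"
      using multiplicity_gap_le_multiplicity[OF \<open>2 \<le> n\<close> W(3,4) j q False] by blast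
    have "multiplicity q (z_of n y (2 ^ (j - 1)))
        = level_count n (\<lambda>k. multiplicity q (y k)) (2 ^ (j - 1))"
      by (rule multiplicity_z_of[OF W(3) power_of_2_mem[OF j] q])
    also have "\<dots> \<le> multiplicity q (y j) - multiplicity q (y i)"
      by (rule level_count_power_of_2_le[OF j i(1,2)])
    also have "\<dots> \<le> multiplicity q (x j)" by (rule i(3))
    finally show "multiplicity q (z_of n y (2 ^ (j - 1))) \<le> multiplicity q (x j)" .
  qed
qed simp

lemma W_set_subset_image_the_map:
  assumes "2 \<le> n"
  shows "W_set n \<subseteq> the_map n ` A_set n"
proof clarify
  fix x y assume xy: "(x, y) \<in> W_set n"
  note W = W_setD[OF xy]
  define x' where "x' = (\<lambda>j\<in>{1..n}. x j div z_of n y (2 ^ (j - 1)))"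
  have nz: "\<forall>h\<in>{1..2 ^ n - 1}. z_of n y h \<noteq> 0" using z_of_nonzero[OF W(3)] by blast
  have x_eq: "z_of n y (2 ^ (j - 1)) * x' j = x j" if "j \<in> {1..n}" for j
    using z_of_dvd[OF assms xy that] that by (simp add: x'_def)
  have y_eq: "y_of n (z_of n y) j = y j" if "j \<in> {1..n}" for j
    by (rule y_of_z_of[OF W(3) that])
  have "the_map n (x', z_of n y) = (\<lambda>j\<in>{1..n}. x j, \<lambda>j\<in>{1..n}. y j)"
    unfolding the_map_eq using x_eq y_eq by (auto intro: restrict_ext)
  then have image: "the_map n (x', z_of n y) = (x, y)"
    using PiE_restrict[OF W(1)] PiE_restrict[OF W(2)] by simp
  have "(\<Sum>i=1..n. z_of n y (2 ^ (i - 1)) * x' i * (\<Prod>k\<in>{1..n} - {i}. y_of n (z_of n y) k))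
      = (\<Sum>i=1..n. x i * (\<Prod>k\<in>{1..n} - {i}. y k))"
    using x_eq y_eq by (intro sum.cong prod.cong) auto
  then have A_eq: "(\<Sum>j=1..n. (\<Prod>h=1..2 ^ n - 1. z_of n y h ^ (1 - eps j h)) *
      z_of n y (2 ^ (j - 1)) * x' j) = 0"
    using W(4) W_sum_eq_0_iff_A_sum_eq_0[OF nz] by simp
  have "z_of n y \<in> extensional {1..2 ^ n - 1}" by (simp add: z_of_def)
  then have "(x', z_of n y) \<in> A_set n"
    using nz reduced_z_of[OF W(3)] z_of_pos[OF W(3)] A_eq
    unfolding A_set_def by (auto simp: x'_def PiE_iff)
  with image show "(x, y) \<in> the_map n ` A_set n" by force
qed

theorem mainTheorem11:
  fixes n :: nat
  assumes "n \<ge> 3"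
  shows "bij_betw (the_map n) (A_set n) (W_set n)"
  unfolding bij_betw_def
proof (intro conjI equalityI)
  show "inj_on (the_map n) (A_set n)" by (rule inj_on_the_map)
  show "the_map n ` A_set n \<subseteq> W_set n" using the_map_mem_W_set by auto
  show "W_set n \<subseteq> the_map n ` A_set n" using assms by (intro W_set_subset_image_the_map) simp
qed

end
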